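(* (1) Let $f,g$ be two packed words (of the same length). Then $f\leq g$ if, and only if, $\mathrm{Std}(f)=\mathrm{Std}(g)$ and $M(f)\subseteq M(g)$. (2) For all $n\geq1$, the map $$\Phi:(\{\text{packed words of length }n\},\leq)\longrightarrow\bigsqcup_{\sigma\in\mathfrak{S}_n}(\{\text{subsets of }M(\sigma)\},\subseteq),\qquad f\longmapsto M(f)\subseteq M(\mathrm{Std}(f)),$$ is an isomorphism of posets (the target being the disjoint union of the posets of subsets of $M(\sigma)$ ordered by inclusion, with elements in different components incomparable). Hence the poset of packed words of length $n$ is a disjoint union, indexed by $\sigma\in\mathfrak{S}_n$, of posets isomorphic to the Boolean lattices of subsets of $M(\sigma)$.
   Context: $[n]=\{1,\ldots,n\}$. A packed word of length $n$ is a word $f=f(1)\ldots f(n)$ of positive integers with $\{f(1),\ldots,f(n)\}=[\max f]$; permutations of $[n]$ are the packed words of length $n$ with distinct letters, $\mathfrak{S}_n$ their set. For packed words $f,g$ of length $n$, $g\leq f$ means: for all $i,j\in[n]$, $f(i)\leq f(j)\Rightarrow g(i)\leq g(j)$; $f(i)>f(j)$ and $i<j\Rightarrow g(i)>g(j)$; $f(i)=f(j)\Rightarrow g(i)=g(j)$. The standardization $\mathrm{Std}(f)$ of a packed word $f$ of length $n$ is the unique $\sigma\in\mathfrak{S}_n$ such that for all $i,j$: $f(i)<f(j)\Rightarrow\sigma(i)<\sigma(j)$, and ($f(i)=f(j)$ and $i<j$) $\Rightarrow\sigma(i)<\sigma(j)$. For a packed word $f$ of length $n$, $M(f)$ is the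 set of $i\in[n]$ such that: $f(i)<\max f$; for all $j\in[n]$, $f(j)=f(i)\Rightarrow j\leq i$; and for all $j\in[n]$, $f(j)=f(i)+1\Rightarrow j>i$. *)

theory Defs
  imports Main
begin

text \<open>Words are lists of naturals; letters are addressed 1-based: position i of f,
  for i in {1..length f}, is f ! (i - 1).\<close>

definition at :: "nat list \<Rightarrow> nat \<Rightarrow> nat" where
  "at f i = f ! (i - 1)"

definition maxw :: "nat list \<Rightarrow> nat" where
  "maxw f = Max (insert 0 (set f))"

definition packed :: "nat list \<Rightarrow> bool" where
  "packed f \<longleftrightarrow> set f = {1..maxw f}"

definition packed_words :: "nat \<Rightarrow> nat list set" where
  "packed_words n = {f. packed f \<and> length f = n}"

definition perms :: "nat \<Rightarrow> nat list set" where
  "perms n = {f. packed f \<and> length f = n \<and> distinct f}"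

text \<open>pw_le g f means g \<le> f.\<close>
definition pw_le :: "nat list \<Rightarrow> nat list \<Rightarrow> bool" where
  "pw_le g f \<longleftrightarrow> length g = length f \<and>
     (\<forall>i\<in>{1..length f}. \<forall>j\<in>{1..length f}.
        (at f i \<le> at f j \<longrightarrow> at g i \<le> at g j) \<and>
        (at f i > at f j \<and> i < j \<longrightarrow> at g i > at g j) \<and>
        (at f i = at f j \<longrightarrow> at g i = at g j))"

definition Std :: "nat list \<Rightarrow> nat list" where
  "Std f = (THE \<sigma>. \<sigma> \<in> perms (length f) \<and>
     (\<forall>i\<in>{1..length f}. \<forall>j\<in>{1..length f}.
        (at f i < at f j \<longrightarrow> at \<sigma> i < at \<sigma> j) \<and>
        (at f i = at f j \<and> i < j \<longrightarrow> at \<sigma> i < at \<sigma> j)))"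

definition M :: "nat list \<Rightarrow> nat set" where
  "M f = {i\<in>{1..length f}. at f i < maxw f \<and>
     (\<forall>j\<in>{1..length f}. at f j = at f i \<longrightarrow> j \<le> i) \<and>
     (\<forall>j\<in>{1..length f}. at f j = at f i + 1 \<longrightarrow> j > i)}"

text \<open>Target poset: disjoint union over \<sigma> of subsets of M \<sigma>, as pairs (\<sigma>, S);
  (\<sigma>,S) \<le> (\<tau>,T) iff \<sigma> = \<tau> and S \<subseteq> T.\<close>
definition boolean_union :: "nat \<Rightarrow> (nat list \<times> nat set) set" where
  "boolean_union n = {(\<sigma>, S). \<sigma> \<in> perms n \<and> S \<subseteq> M \<sigma>}"

definition bu_le :: "nat list \<times> nat set \<Rightarrow> nat list \<times> nat set \<Rightarrow> bool" where
  "bu_le x y \<longleftrightarrow> fst x = fst y \<and> snd x \<subseteq> snd y"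

definition Phi :: "nat list \<Rightarrow> nat list \<times> nat set" where
  "Phi f = (Std f, M f)"

end

theory Submission
  imports Defs
begin

text \<open>Order the positions of a packed word f by its standardization. Along this order the
  letters increase by steps of 0 or 1, and a step of 0 from i to the next position is only
  possible if i lies to the left of it; M f consists of the positions i where such a step
  could have been 0 but is 1. Thus f \<le> g exactly when f arises from g by flattening some of
  these steps: Std f = Std g and M f \<subseteq> M g. A packed word is determined by its weak order,
  hence by Std f and M f, and every subset of M \<sigma> occurs, since merging the letters at f a
  and at f a + 1 for a \<in> M f removes exactly a from M.\<close>

section \<open>Packed words and permutations\<close>

lemma at_Suc [simp]: "at f (Suc k) = f ! k"
  by (simp add: at_def)

lemma image_at: "at f ` {1..length f} = set f"
proof
  show "at f ` {1..length f} \<subseteq> set f"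
    by (auto simp: at_def)
  show "set f \<subseteq> at f ` {1..length f}"
  proof
    fix v assume "v \<in> set f"
    then obtain k where "k < length f" "f ! k = v"
      by (auto simp: in_set_conv_nth)
    then show "v \<in> at f ` {1..length f}"
      by (auto intro!: image_eqI[where x = "Suc k"])
  qed
qed

lemma maxw_eqI: "set xs = {1..n} \<Longrightarrow> maxw xs = n"
proof -
  assume "set xs = {1..n}"
  moreover have "insert 0 {1..n} = {0..n}" by auto
  moreover have "Max {0..n} = n" by (rule Max_eqI) auto
  ultimately show ?thesis by (simp add: maxw_def)
qed

lemma packed_at_in: "packed f \<Longrightarrow> i \<in> {1..length f} \<Longrightarrow> at f i \<in> {1..maxw f}"
  using image_at unfolding packed_def by blast

lemma packed_value_attained:
  "packed f \<Longrightarrow> v \<in> {1..maxw f} \<Longrightarrow> \<exists>j\<in>{1..length f}. at f j = v"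
  using image_at unfolding packed_def by (metis imageE)

lemma packed_last_position:
  assumes "packed f" "v \<in> {1..maxw f}"
  obtains a where "a \<in> {1..length f}" "at f a = v"
    "\<And>k. k \<in> {1..length f} \<Longrightarrow> at f k = v \<Longrightarrow> k \<le> a"
proof -
  let ?S = "{k \<in> {1..length f}. at f k = v}"
  have fin: "finite ?S" by simp
  have ne: "?S \<noteq> {}" using packed_value_attained[OF assms] by auto
  show ?thesis
  proof (rule that)
    show "Max ?S \<in> {1..length f}" "at f (Max ?S) = v" using Max_in[OF fin ne] by auto
    show "k \<le> Max ?S" if "k \<in> {1..length f}" "at f k = v" for k
      using Max_ge[OF fin] that by blast
  qed
qed

lemma mem_M_iff: "i \<in> M f \<longleftrightarrow> i \<in> {1..length f} \<and> at f i < maxw f \<and>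
     (\<forall>j\<in>{1..length f}. at f j = at f i \<longrightarrow> j \<le> i) \<and>
     (\<forall>j\<in>{1..length f}. at f j = at f i + 1 \<longrightarrow> i < j)"
  unfolding M_def by blast

lemma mem_MD:
  assumes "i \<in> M f"
  shows "i \<in> {1..length f}" "at f i < maxw f"
    and "\<And>j. j \<in> {1..length f} \<Longrightarrow> at f j = at f i \<Longrightarrow> j \<le> i"
    and "\<And>j. j \<in> {1..length f} \<Longrightarrow> at f j = at f i + 1 \<Longrightarrow> i < j"
  using assms unfolding mem_M_iff by auto

lemma set_perm: "\<sigma> \<in> perms n \<Longrightarrow> set \<sigma> = {1..n}"
proof -
  assume "\<sigma> \<in> perms n"
  then have \<sigma>: "set \<sigma> = {1..maxw \<sigma>}" "length \<sigma> = n" "distinct \<sigma>"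
    by (auto simp: perms_def packed_def)
  then have "maxw \<sigma> = n"
    by (metis card_atLeastAtMost diff_Suc_1 distinct_card)
  then show ?thesis using \<sigma>(1) by simp
qed

lemma inj_on_at_perm: "\<sigma> \<in> perms n \<Longrightarrow> inj_on (at \<sigma>) {1..n}"
  by (auto simp: inj_on_def perms_def at_def nth_eq_iff_index_eq)

lemma card_at_le_perm:
  assumes \<sigma>: "\<sigma> \<in> perms n" and i: "i \<in> {1..n}"
  shows "card {j\<in>{1..n}. at \<sigma> j \<le> at \<sigma> i} = at \<sigma> i"
proof -
  have "at \<sigma> ` {j\<in>{1..n}. at \<sigma> j \<le> at \<sigma> i} = {v\<in>at \<sigma> ` {1..n}. v \<le> at \<sigma> i}"
    by auto
  also have "\<dots> = {1..at \<sigma> i}"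
  proof -
    have range: "at \<sigma> ` {1..n} = {1..n}"
      using image_at[of \<sigma>] set_perm[OF \<sigma>] \<sigma> by (simp add: perms_def)
    then have "at \<sigma> i \<le> n" using i by (metis atLeastAtMost_iff imageI)
    then show ?thesis using range by auto
  qed
  finally have "at \<sigma> ` {j\<in>{1..n}. at \<sigma> j \<le> at \<sigma> i} = {1..at \<sigma> i}" .
  moreover have "inj_on (at \<sigma>) {j\<in>{1..n}. at \<sigma> j \<le> at \<sigma> i}"
    using inj_on_at_perm[OF \<sigma>] by (rule inj_on_subset) auto
  ultimately show ?thesis by (metis card_atLeastAtMost card_image diff_Suc_1)
qed

section \<open>Standardization\<close>

definition std_less :: "nat list \<Rightarrow> nat \<Rightarrow> nat \<Rightarrow> bool" where
  "std_less f x y \<longleftrightarrow> at f x < at f y \<or> (at f x = at f y \<and> x < y)"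

lemma std_less_irrefl: "\<not> std_less f x x"
  by (simp add: std_less_def)

lemma std_less_trans: "std_less f x y \<Longrightarrow> std_less f y z \<Longrightarrow> std_less f x z"
  by (auto simp: std_less_def)

lemma std_less_asym: "std_less f x y \<Longrightarrow> \<not> std_less f y x"
  by (auto simp: std_less_def)

lemma std_less_total: "x \<noteq> y \<Longrightarrow> std_less f x y \<or> std_less f y x"
  by (auto simp: std_less_def)

lemma std_less_sandwich:
  "std_less f x k \<Longrightarrow> std_less f k y \<Longrightarrow> at f x = at f y \<Longrightarrow> at f k = at f x \<and> x < k \<and> k < y"
  by (auto simp: std_less_def)

definition standardizes :: "nat list \<Rightarrow> nat list \<Rightarrow> bool" where
  "standardizes f \<sigma> \<longleftrightarrow> \<sigma> \<in> perms (length f) \<and>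
     (\<forall>x\<in>{1..length f}. \<forall>y\<in>{1..length f}. std_less f x y \<longrightarrow> at \<sigma> x < at \<sigma> y)"

lemma Std_eq_The_standardizes: "Std f = (THE \<sigma>. standardizes f \<sigma>)"
  unfolding Std_def standardizes_def std_less_def by (intro arg_cong[where f = The] ext) blast

lemma standardizes_at:
  assumes st: "standardizes f \<sigma>" and x: "x \<in> {1..length f}"
  shows "at \<sigma> x = card {y\<in>{1..length f}. std_less f y x \<or> y = x}"
proof -
  have \<sigma>: "\<sigma> \<in> perms (length f)"
    and less: "\<And>x y. x \<in> {1..length f} \<Longrightarrow> y \<in> {1..length f} \<Longrightarrow> std_less f x y \<Longrightarrow> at \<sigma> x < at \<sigma> y"
    using st by (auto simp: standardizes_def)
  have "at \<sigma> y \<le> at \<sigma> x \<longleftrightarrow> std_less f y x \<or> y = x" if "y \<in> {1..length f}" for y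
    using less[OF x that] less[OF that x] std_less_total[of x y f] by fastforce
  then have "{y\<in>{1..length f}. at \<sigma> y \<le> at \<sigma> x} = {y\<in>{1..length f}. std_less f y x \<or> y = x}"
    by blast
  then show ?thesis using card_at_le_perm[OF \<sigma> x] by simp
qed

lemma standardizes_unique:
  assumes "standardizes f \<sigma>" "standardizes f \<tau>"
  shows "\<sigma> = \<tau>"
proof (rule nth_equalityI)
  show "length \<sigma> = length \<tau>" using assms by (simp add: standardizes_def perms_def)
  fix k assume "k < length \<sigma>"
  then have "Suc k \<in> {1..length f}" using assms by (simp add: standardizes_def perms_def)
  then show "\<sigma> ! k = \<tau> ! k"
    using standardizes_at[OF assms(1)] standardizes_at[OF assms(2)] by (metis at_Suc)
qed

lemma standardizes_exists: "\<exists>\<sigma>. standardizes f \<sigma>"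
proof -
  let ?n = "length f"
  define r where "r x = card {y\<in>{1..?n}. std_less f y x \<or> y = x}" for x
  define \<sigma> where "\<sigma> = map r [1..<?n+1]"
  have at_\<sigma>: "at \<sigma> x = r x" if "x \<in> {1..?n}" for x
    using that by (cases x) (auto simp: \<sigma>_def simp del: upt_Suc)
  have r_less: "r x < r y" if "std_less f x y" "y \<in> {1..?n}" for x y
  proof -
    have "{z\<in>{1..?n}. std_less f z x \<or> z = x} \<subseteq> {z\<in>{1..?n}. std_less f z y \<or> z = y}"
      using that(1) by (auto intro: std_less_trans)
    moreover have "y \<notin> {z\<in>{1..?n}. std_less f z x \<or> z = x}"
      using that(1) std_less_asym std_less_irrefl by blast
    ultimately have "{z\<in>{1..?n}. std_less f z x \<or> z = x} \<subset> {z\<in>{1..?n}. std_less f z y \<or> z = y}"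
      using that(2) by blast
    then show ?thesis unfolding r_def by (simp add: psubset_card_mono)
  qed
  have "inj_on r {1..?n}"
    by (rule inj_onI) (metis r_less std_less_total less_irrefl)
  then have distinct: "distinct \<sigma>"
    by (simp add: \<sigma>_def distinct_map atLeastLessThanSuc_atLeastAtMost del: upt_Suc)
  have length: "length \<sigma> = ?n" by (simp add: \<sigma>_def del: upt_Suc)
  have r_range: "r x \<in> {1..?n}" if "x \<in> {1..?n}" for x
  proof -
    have "x \<in> {y\<in>{1..?n}. std_less f y x \<or> y = x}" using that by blast
    then have "r x > 0" unfolding r_def by (subst card_gt_0_iff) auto
    moreover have "r x \<le> card {1..?n}" unfolding r_def by (rule card_mono) auto
    ultimately show ?thesis by simp
  qed
  have "set \<sigma> = r ` {1..?n}"
    by (simp add: \<sigma>_def atLeastLessThanSuc_atLeastAtMost del: upt_Suc)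
  then have "set \<sigma> \<subseteq> {1..?n}" using r_range by (simp add: image_subset_iff)
  moreover have "card (set \<sigma>) = card {1..?n}"
    using distinct length by (simp add: distinct_card)
  ultimately have "set \<sigma> = {1..?n}"
    by (intro card_subset_eq) simp_all
  then have "\<sigma> \<in> perms ?n"
    using distinct length maxw_eqI[of \<sigma> ?n] by (simp add: perms_def packed_def)
  moreover have "at \<sigma> x < at \<sigma> y"
    if "x \<in> {1..?n}" "y \<in> {1..?n}" "std_less f x y" for x y
    using r_less[OF that(3,2)] at_\<sigma>[OF that(1)] at_\<sigma>[OF that(2)] by simp
  ultimately show ?thesis unfolding standardizes_def by blast
qed

lemma standardizes_Std: "standardizes f (Std f)"
  unfolding Std_eq_The_standardizes
  using standardizes_exists standardizes_unique by (metis theI)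

lemma Std_eqI: "standardizes f \<sigma> \<Longrightarrow> Std f = \<sigma>"
  using standardizes_Std standardizes_unique by blast

lemma Std_in_perms: "Std f \<in> perms (length f)"
  using standardizes_Std standardizes_def by blast

lemma length_Std [simp]: "length (Std f) = length f"
  using Std_in_perms by (simp add: perms_def)

lemma at_Std_less_iff:
  assumes "x \<in> {1..length f}" "y \<in> {1..length f}"
  shows "at (Std f) x < at (Std f) y \<longleftrightarrow> std_less f x y"
proof -
  have less: "at (Std f) u < at (Std f) w"
    if "u \<in> {1..length f}" "w \<in> {1..length f}" "std_less f u w" for u w
    using standardizes_Std[of f] that unfolding standardizes_def by blast
  show ?thesis
  proof
    assume h: "at (Std f) x < at (Std f) y"
    show "std_less f x y"
    proof (rule ccontr)
      assume "\<not> std_less f x y"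
      moreover have "x \<noteq> y" using h by auto
      ultimately have "std_less f y x" using std_less_total by blast
      then show False using less[OF assms(2,1)] h by simp
    qed
  qed (rule less[OF assms])
qed

lemma Std_eq_if_std_less_imp:
  assumes len: "length f = length g"
    and less: "\<And>x y. x \<in> {1..length g} \<Longrightarrow> y \<in> {1..length g} \<Longrightarrow> std_less g x y \<Longrightarrow> std_less f x y"
  shows "Std f = Std g"
proof -
  have "standardizes g (Std f)"
    unfolding standardizes_def
  proof (intro conjI ballI impI)
    show "Std f \<in> perms (length g)" using Std_in_perms[of f] len by simp
    fix x y assume "x \<in> {1..length g}" "y \<in> {1..length g}" "std_less g x y"
    then show "at (Std f) x < at (Std f) y" using at_Std_less_iff[of x f y] less len by simp
  qed
  then show ?thesis using Std_eqI by metis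
qed

lemma std_less_iff_if_Std_eq:
  "Std f = Std g \<Longrightarrow> length f = length g \<Longrightarrow> x \<in> {1..length f} \<Longrightarrow> y \<in> {1..length f}
   \<Longrightarrow> std_less f x y \<longleftrightarrow> std_less g x y"
  using at_Std_less_iff[of x f y] at_Std_less_iff[of x g y] by simp

lemma Std_perm:
  assumes \<sigma>: "\<sigma> \<in> perms n"
  shows "Std \<sigma> = \<sigma>"
proof (rule Std_eqI)
  have len: "length \<sigma> = n" using \<sigma> by (simp add: perms_def)
  have "at \<sigma> x < at \<sigma> y" if "x \<in> {1..n}" "y \<in> {1..n}" "std_less \<sigma> x y" for x y
    using inj_onD[OF inj_on_at_perm[OF \<sigma>], of x y] that by (auto simp: std_less_def)
  then show "standardizes \<sigma> \<sigma>" using \<sigma> len by (simp add: standardizes_def)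
qed

section \<open>The order on packed words\<close>

lemma pw_leD:
  assumes "pw_le f g" "i \<in> {1..length g}" "j \<in> {1..length g}"
  shows "length f = length g"
    and "at g i \<le> at g j \<Longrightarrow> at f i \<le> at f j"
    and "at g j < at g i \<Longrightarrow> i < j \<Longrightarrow> at f j < at f i"
    and "at g i = at g j \<Longrightarrow> at f i = at f j"
  using assms unfolding pw_le_def by blast+

lemma pw_le_less:
  assumes "pw_le f g" "x \<in> {1..length g}" "y \<in> {1..length g}" "at f x < at f y"
  shows "at g x < at g y"
  using pw_leD(2)[OF assms(1,3,2)] assms(4) by linarith

lemma pw_le_imp_Std_eq:
  assumes le: "pw_le f g"
  shows "Std f = Std g"
proof (rule Std_eq_if_std_less_imp)
  show "length f = length g" using le by (simp add: pw_le_def)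
  fix x y assume xy: "x \<in> {1..length g}" "y \<in> {1..length g}" and "std_less g x y"
  then consider "at g x = at g y" "x < y" | "at g x < at g y"
    by (auto simp: std_less_def)
  then show "std_less f x y"
  proof cases
    case 1
    then show ?thesis using pw_leD(4)[OF le xy] by (simp add: std_less_def)
  next
    case 2
    then have "at f x \<le> at f y" "y < x \<Longrightarrow> at f x < at f y"
      using pw_leD(2,3)[OF le xy] pw_leD(3)[OF le xy(2,1)] by auto
    then show ?thesis using 2 by (cases x y rule: linorder_cases) (auto simp: std_less_def)
  qed
qed

lemma pw_le_imp_M_subset:
  assumes pf: "packed f" and pg: "packed g" and le: "pw_le f g"
  shows "M f \<subseteq> M g"
proof
  let ?n = "length g"
  have len: "length f = ?n" using le by (simp add: pw_le_def)
  fix i assume "i \<in> M f"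
  then have i: "i \<in> {1..?n}" "at f i < maxw f"
    and last: "\<And>j. j \<in> {1..?n} \<Longrightarrow> at f j = at f i \<Longrightarrow> j \<le> i"
    and succ: "\<And>j. j \<in> {1..?n} \<Longrightarrow> at f j = at f i + 1 \<Longrightarrow> i < j"
    unfolding mem_M_iff len by auto
  obtain k where k: "k \<in> {1..?n}" "at f k = at f i + 1"
    using packed_value_attained[OF pf, of "at f i + 1"] i len by auto
  have gik: "at g i < at g k"
    using pw_le_less[OF le i(1) k(1)] k by simp
  moreover have "at g k \<le> maxw g"
    using packed_at_in[OF pg k(1)] by simp
  ultimately have "at g i < maxw g" by simp
  moreover have "j \<le> i" if "j \<in> {1..?n}" "at g j = at g i" for j
    using last pw_leD(4)[OF le that(1) i(1)] that by blast
  moreover have "i < j" if j: "j \<in> {1..?n}" "at g j = at g i + 1" for j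
  proof (rule ccontr)
    assume "\<not> i < j"
    with j have "j < i" by (cases "j = i") auto
    then have "at f i < at f j"
      using pw_leD(3)[OF le j(1) i(1)] j(2) by simp
    moreover have "at f j \<noteq> at f i + 1"
      using succ[OF j(1)] \<open>j < i\<close> by auto
    ultimately have "at f k < at f j" using k by simp
    then show False
      using pw_le_less[OF le k(1) j(1)] gik j(2) by simp
  qed
  ultimately show "i \<in> M g" using i by (simp add: mem_M_iff)
qed

text \<open>If the weak orders of f and g disagreed at i, j, the last position a of the value
  just below at f i would lie in M f but, sharing its g-value with the later position i,
  not in M g.\<close>

lemma at_le_reflected:
  assumes pf: "packed f" and len: "length f = length g"
    and st: "Std f = Std g" and sub: "M f \<subseteq> M g"
    and i: "i \<in> {1..length g}" and j: "j \<in> {1..length g}" and gij: "at g i \<le> at g j"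
  shows "at f i \<le> at f j"
proof (rule ccontr)
  let ?n = "length g"
  have same: "std_less f x y \<longleftrightarrow> std_less g x y" if "x \<in> {1..?n}" "y \<in> {1..?n}" for x y
    using std_less_iff_if_Std_eq[OF st len] that len by simp
  assume "\<not> at f i \<le> at f j"
  then have fji: "at f j < at f i" by simp
  then have "std_less g j i" using same[OF j i] by (simp add: std_less_def)
  then have gji: "at g j = at g i" "j < i" using gij by (auto simp: std_less_def)
  have "at f i - 1 \<in> {1..maxw f}"
    using fji packed_at_in[OF pf, of j] packed_at_in[OF pf, of i] i j len by auto
  then obtain a where a: "a \<in> {1..?n}" "at f a = at f i - 1"
    and last: "\<And>k. k \<in> {1..?n} \<Longrightarrow> at f k = at f i - 1 \<Longrightarrow> k \<le> a"
    using packed_last_position[OF pf] len by metis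
  have "std_less f a i" using a fji by (simp add: std_less_def)
  then have gai: "std_less g a i" using same[OF a(1) i] by simp
  have "std_less f j a \<or> j = a"
    using last[OF j] a fji by (cases "at f j = at f i - 1") (auto simp: std_less_def)
  then have "std_less g j a \<or> j = a" using same[OF j a(1)] by simp
  then have "at g a = at g i \<and> a < i"
  proof
    assume "std_less g j a"
    then show ?thesis using std_less_sandwich[OF _ gai gji(1)] gji(1) by simp
  next
    assume "j = a"
    then show ?thesis using gai gji by (auto simp: std_less_def)
  qed
  then have ga: "at g a = at g i" "a < i" by auto
  have "a \<in> M f"
    unfolding mem_M_iff
  proof (intro conjI ballI impI)
    show "a \<in> {1..length f}" using a len by simp
    show "at f a < maxw f" using a fji packed_at_in[OF pf, of i] i len by auto
    fix k assume k: "k \<in> {1..length f}"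
    show "k \<le> a" if "at f k = at f a" using last k that a len by simp
    show "a < k" if fk: "at f k = at f a + 1"
    proof (cases "i \<le> k")
      case False
      have "std_less f k i" "std_less f a k"
        using fk a fji False by (auto simp: std_less_def)
      then have "std_less g a k" "std_less g k i"
        using same[of k i] same[of a k] k i a(1) len by auto
      then show ?thesis using std_less_sandwich ga(1) by blast
    qed (use ga in simp)
  qed
  then have "a \<in> M g" using sub by blast
  then have "i \<le> a" using ga i unfolding mem_M_iff by auto
  then show False using ga by simp
qed

lemma pw_le_iff:
  assumes pf: "packed f" and pg: "packed g" and len: "length f = length g"
  shows "pw_le f g \<longleftrightarrow> Std f = Std g \<and> M f \<subseteq> M g"
proof (intro iffI conjI)
  assume "pw_le f g"
  then show "Std f = Std g" "M f \<subseteq> M g"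
    using pw_le_imp_Std_eq pw_le_imp_M_subset pf pg by auto
next
  assume "Std f = Std g \<and> M f \<subseteq> M g"
  then have st: "Std f = Std g" and sub: "M f \<subseteq> M g" by auto
  note le = at_le_reflected[OF pf len st sub]
  show "pw_le f g"
    unfolding pw_le_def
  proof (intro conjI ballI impI)
    fix i j assume ij: "i \<in> {1..length g}" "j \<in> {1..length g}"
    show "at f i \<le> at f j" if "at g i \<le> at g j" using le[OF ij that] .
    show "at f i = at f j" if "at g i = at g j"
      using le[OF ij] le[OF ij(2,1)] that by simp
    assume "at g j < at g i \<and> i < j"
    then have "std_less g j i" by (simp add: std_less_def)
    then have "std_less f j i"
      using std_less_iff_if_Std_eq[OF st len] ij len by simp
    then show "at f j < at f i" using \<open>at g j < at g i \<and> i < j\<close> by (auto simp: std_less_def)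
  qed (rule len)
qed

lemma pw_le_Std: "pw_le f (Std f)"
  unfolding pw_le_def
proof (intro conjI ballI impI)
  fix i j assume "i \<in> {1..length (Std f)}" "j \<in> {1..length (Std f)}"
  then have ij: "i \<in> {1..length f}" "j \<in> {1..length f}" by auto
  have inj: "i = j" if "at (Std f) i = at (Std f) j"
    using inj_onD[OF inj_on_at_perm[OF Std_in_perms] that] ij .
  show "at f i \<le> at f j" if "at (Std f) i \<le> at (Std f) j"
  proof (cases "i = j")
    case False
    then have "std_less f i j" using inj that at_Std_less_iff[OF ij] by (metis nat_less_le)
    then show ?thesis by (auto simp: std_less_def)
  qed simp
  show "at f j < at f i" if "at (Std f) j < at (Std f) i \<and> i < j"
    using that at_Std_less_iff[OF ij(2,1)] by (auto simp: std_less_def)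
  show "at f i = at f j" if "at (Std f) i = at (Std f) j"
    using inj that by simp
qed simp

lemma card_image_le_if_factors:
  assumes fin: "finite T" and kernel: "\<And>j k. j \<in> T \<Longrightarrow> k \<in> T \<Longrightarrow> q j = q k \<Longrightarrow> p j = p k"
  shows "card (p ` T) \<le> card (q ` T)"
proof -
  have "p (inv_into T q (q j)) = p j" if j: "j \<in> T" for j
  proof (rule kernel)
    show "inv_into T q (q j) \<in> T" using inv_into_into[OF imageI[OF j]] .
    show "q (inv_into T q (q j)) = q j" using f_inv_into_f[OF imageI[OF j]] .
  qed (rule j)
  then have "p ` T = (\<lambda>v. p (inv_into T q v)) ` q ` T"
    by (simp add: image_image)
  also have "card \<dots> \<le> card (q ` T)"
    by (rule card_image_le) (simp add: fin)
  finally show ?thesis .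
qed

lemma packed_at_eq_card:
  assumes pf: "packed f" and i: "i \<in> {1..length f}"
  shows "at f i = card (at f ` {j\<in>{1..length f}. at f j \<le> at f i})"
proof -
  have "at f ` {j\<in>{1..length f}. at f j \<le> at f i} = {v\<in>at f ` {1..length f}. v \<le> at f i}"
    by blast
  also have "\<dots> = {v\<in>{1..maxw f}. v \<le> at f i}"
    using pf unfolding image_at packed_def by simp
  also have "\<dots> = {1..at f i}"
    using packed_at_in[OF pf i] by auto
  finally show ?thesis by simp
qed

text \<open>A packed word is determined by its weak order: each letter counts the distinct
  letters below or equal to it.\<close>

lemma pw_le_antisym:
  assumes pf: "packed f" and pg: "packed g" and fg: "pw_le f g" and gf: "pw_le g f"
  shows "f = g"
proof (rule nth_equalityI)
  show len: "length f = length g" using fg by (simp add: pw_le_def)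
  let ?I = "{1..length f}"
  have le_iff: "at f x \<le> at f y \<longleftrightarrow> at g x \<le> at g y" if "x \<in> ?I" "y \<in> ?I" for x y
    using pw_leD(2)[OF fg, of x y] pw_leD(2)[OF gf, of x y] that len by auto
  have eq_iff: "at f x = at f y \<longleftrightarrow> at g x = at g y" if "x \<in> ?I" "y \<in> ?I" for x y
    using le_iff[OF that] le_iff[OF that(2,1)] by (simp add: order_eq_iff)
  fix k assume "k < length f"
  define i where "i = Suc k"
  have i: "i \<in> ?I" using \<open>k < length f\<close> by (simp add: i_def)
  define T where "T = {j\<in>?I. at f j \<le> at f i}"
  have T_g: "T = {j\<in>{1..length g}. at g j \<le> at g i}"
    unfolding T_def using le_iff[OF _ i] len by auto
  have fin: "finite T" by (simp add: T_def)
  have kernel: "at f j = at f l \<longleftrightarrow> at g j = at g l" if "j \<in> T" "l \<in> T" for j l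
    using that eq_iff[of j l] unfolding T_def by simp
  have "at f i = card (at f ` T)"
    unfolding T_def by (rule packed_at_eq_card[OF pf i])
  also have "\<dots> = card (at g ` T)"
    using card_image_le_if_factors[OF fin, of "at g" "at f"]
      card_image_le_if_factors[OF fin, of "at f" "at g"] kernel
    by (meson antisym)
  also have "\<dots> = at g i"
    unfolding T_g using packed_at_eq_card[OF pg] i len by simp
  finally show "f ! k = g ! k" by (simp add: i_def)
qed

section \<open>Merging two consecutive letters\<close>

definition merge_value :: "nat \<Rightarrow> nat \<Rightarrow> nat" where
  "merge_value v x = (if v < x then x - 1 else x)"

definition merge_letter :: "nat list \<Rightarrow> nat \<Rightarrow> nat list" where
  "merge_letter f v = map (merge_value v) f"

lemma merge_value_mono: "x \<le> y \<Longrightarrow> merge_value v x \<le> merge_value v y"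
  by (auto simp: merge_value_def)

lemma merge_value_eq_iff:
  "merge_value v x = merge_value v y \<longleftrightarrow> x = y \<or> {x, y} \<subseteq> {v, v + 1}"
  by (auto simp: merge_value_def)

lemma merge_value_Suc: "w \<noteq> v \<Longrightarrow> merge_value v (w + 1) = merge_value v w + 1"
  by (auto simp: merge_value_def)

lemma merge_value_eq_Suc_iff:
  "w \<noteq> v \<Longrightarrow> merge_value v y = merge_value v w + 1 \<longleftrightarrow> y = w + 1 \<or> (w + 1 = v \<and> y = v + 1)"
  by (auto simp: merge_value_def)

lemma merge_value_less_iff:
  "w \<noteq> v \<Longrightarrow> v < m \<Longrightarrow> merge_value v w < m - 1 \<longleftrightarrow> w < m"
  by (auto simp: merge_value_def)

lemma image_merge_value:
  assumes "1 \<le> v" "v < m"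
  shows "merge_value v ` {1..m} = {1..m - 1}"
proof
  show "merge_value v ` {1..m} \<subseteq> {1..m - 1}"
    using assms by (auto simp: merge_value_def)
  show "{1..m - 1} \<subseteq> merge_value v ` {1..m}"
  proof
    fix y assume y: "y \<in> {1..m - 1}"
    show "y \<in> merge_value v ` {1..m}"
    proof (cases "v < y")
      case True
      then have "merge_value v (y + 1) = y" "y + 1 \<in> {1..m}"
        using y by (auto simp: merge_value_def)
      then show ?thesis by (metis imageI)
    next
      case False
      then have "merge_value v y = y" "y \<in> {1..m}"
        using y by (auto simp: merge_value_def)
      then show ?thesis by (metis imageI)
    qed
  qed
qed

lemma length_merge_letter [simp]: "length (merge_letter f v) = length f"
  by (simp add: merge_letter_def)

lemma at_merge_letter:
  assumes "i \<in> {1..length f}"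
  shows "at (merge_letter f v) i = merge_value v (at f i)"
  using assms by (auto simp: merge_letter_def at_def)

lemma mem_M_merge_letter_iff:
  assumes "maxw (merge_letter f v) = maxw f - 1"
  shows "i \<in> M (merge_letter f v) \<longleftrightarrow> i \<in> {1..length f} \<and>
     merge_value v (at f i) < maxw f - 1 \<and>
     (\<forall>j\<in>{1..length f}. merge_value v (at f j) = merge_value v (at f i) \<longrightarrow> j \<le> i) \<and>
     (\<forall>j\<in>{1..length f}. merge_value v (at f j) = merge_value v (at f i) + 1 \<longrightarrow> i < j)"
  unfolding mem_M_iff assms length_merge_letter
  by (intro conj_cong refl ball_cong) (simp_all add: at_merge_letter)

text \<open>For a \<in> M f, every occurrence of at f a + 1 lies to the right of every occurrence
  of at f a, so these two letters can be merged without changing the standardization.\<close>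

context
  fixes f :: "nat list" and a :: nat
  assumes packed_f: "packed f" and a_in_M: "a \<in> M f"
begin

lemma set_merge_letter: "set (merge_letter f (at f a)) = {1..maxw f - 1}"
proof -
  have "1 \<le> at f a" using packed_at_in[OF packed_f mem_MD(1)[OF a_in_M]] by simp
  then have "merge_value (at f a) ` {1..maxw f} = {1..maxw f - 1}"
    using image_merge_value mem_MD(2)[OF a_in_M] by blast
  then show ?thesis
    using packed_f by (simp add: merge_letter_def packed_def)
qed

lemma maxw_merge_letter: "maxw (merge_letter f (at f a)) = maxw f - 1"
  using set_merge_letter by (rule maxw_eqI)

lemma packed_merge_letter: "packed (merge_letter f (at f a))"
  unfolding packed_def using set_merge_letter maxw_merge_letter by simp

lemma Std_merge_letter: "Std (merge_letter f (at f a)) = Std f"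
proof (rule Std_eq_if_std_less_imp)
  show "length (merge_letter f (at f a)) = length f" by simp
  fix x y assume xy: "x \<in> {1..length f}" "y \<in> {1..length f}" and "std_less f x y"
  then consider "at f x < at f y" | "at f x = at f y" "x < y"
    by (auto simp: std_less_def)
  then show "std_less (merge_letter f (at f a)) x y"
  proof cases
    case 1
    show ?thesis
    proof (cases "merge_value (at f a) (at f x) = merge_value (at f a) (at f y)")
      case True
      with 1 have "at f x = at f a" "at f y = at f a + 1"
        by (auto simp: merge_value_eq_iff)
      then have "x < y"
        using mem_MD(3,4)[OF a_in_M] xy by (meson le_less_trans)
      then show ?thesis using True xy by (simp add: std_less_def at_merge_letter)
    next
      case False
      then have "merge_value (at f a) (at f x) < merge_value (at f a) (at f y)"
        using merge_value_mono[of "at f x" "at f y" "at f a"] 1 by linarith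
      then show ?thesis using xy by (simp add: std_less_def at_merge_letter)
    qed
  next
    case 2
    then show ?thesis using xy by (simp add: std_less_def at_merge_letter)
  qed
qed

lemma M_merge_letter_subset: "M (merge_letter f (at f a)) \<subseteq> M f - {a}"
proof
  let ?v = "at f a" and ?I = "{1..length f}"
  fix i assume "i \<in> M (merge_letter f ?v)"
  then have i: "i \<in> ?I" and below: "merge_value ?v (at f i) < maxw f - 1"
    and last: "\<And>j. j \<in> ?I \<Longrightarrow> merge_value ?v (at f j) = merge_value ?v (at f i) \<Longrightarrow> j \<le> i"
    and succ: "\<And>j. j \<in> ?I \<Longrightarrow> merge_value ?v (at f j) = merge_value ?v (at f i) + 1 \<Longrightarrow> i < j"
    unfolding mem_M_merge_letter_iff[OF maxw_merge_letter] by auto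
  have ne: "at f i \<noteq> ?v"
  proof
    assume fi: "at f i = ?v"
    have "?v + 1 \<in> {1..maxw f}" using mem_MD(2)[OF a_in_M] by simp
    then obtain k where k: "k \<in> ?I" "at f k = ?v + 1"
      using packed_value_attained[OF packed_f] by blast
    have "k \<le> i" using last[OF k(1)] k(2) fi by (simp add: merge_value_eq_iff)
    moreover have "i \<le> a" using mem_MD(3)[OF a_in_M i] fi by simp
    moreover have "a < k" using mem_MD(4)[OF a_in_M k(1)] k(2) by simp
    ultimately show False by simp
  qed
  have "i \<in> M f"
    unfolding mem_M_iff
  proof (intro conjI ballI impI)
    show "i \<in> ?I" by (fact i)
    show "at f i < maxw f"
      using below merge_value_less_iff[OF ne mem_MD(2)[OF a_in_M]] by simp
    fix j assume j: "j \<in> ?I"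
    show "j \<le> i" if "at f j = at f i" using last[OF j] that by simp
    show "i < j" if "at f j = at f i + 1"
      using succ[OF j] that merge_value_Suc[OF ne] by simp
  qed
  then show "i \<in> M f - {a}" using ne by auto
qed

lemma M_subset_M_merge_letter: "M f - {a} \<subseteq> M (merge_letter f (at f a))"
proof
  let ?v = "at f a" and ?I = "{1..length f}"
  fix i assume "i \<in> M f - {a}"
  then have iM: "i \<in> M f" and "i \<noteq> a" by auto
  note i = mem_MD[OF iM] and a = mem_MD[OF a_in_M]
  have ne: "at f i \<noteq> ?v"
    using i(3)[OF a(1)] a(3)[OF i(1)] \<open>i \<noteq> a\<close> by fastforce
  show "i \<in> M (merge_letter f ?v)"
    unfolding mem_M_merge_letter_iff[OF maxw_merge_letter]
  proof (intro conjI ballI impI)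
    show "i \<in> ?I" by (fact i(1))
    show "merge_value ?v (at f i) < maxw f - 1"
      using i(2) merge_value_less_iff[OF ne a(2)] by simp
    fix j assume j: "j \<in> ?I"
    show "j \<le> i" if "merge_value ?v (at f j) = merge_value ?v (at f i)"
    proof (cases "at f j = at f i")
      case False
      then have "at f j = ?v" "at f i = ?v + 1"
        using that ne by (auto simp: merge_value_eq_iff)
      then show ?thesis using a(3)[OF j] a(4)[OF i(1)] by simp
    qed (use i(3)[OF j] in simp)
    show "i < j" if "merge_value ?v (at f j) = merge_value ?v (at f i) + 1"
    proof (cases "at f j = at f i + 1")
      case False
      then have "at f i + 1 = ?v" "at f j = ?v + 1"
        using that merge_value_eq_Suc_iff[OF ne] by auto
      then show ?thesis using i(4)[OF a(1)] a(4)[OF j] by simp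
    qed (use i(4)[OF j] in simp)
  qed
qed

lemma M_merge_letter: "M (merge_letter f (at f a)) = M f - {a}"
  using M_merge_letter_subset M_subset_M_merge_letter by (rule subset_antisym)

end

section \<open>The poset isomorphism\<close>

lemma exists_packed_word_M_diff:
  assumes \<sigma>: "\<sigma> \<in> perms n" and "finite T" "T \<subseteq> M \<sigma>"
  shows "\<exists>f. packed f \<and> length f = n \<and> Std f = \<sigma> \<and> M f = M \<sigma> - T"
  using assms(2,3)
proof (induction T rule: finite_induct)
  case empty
  show ?case using \<sigma> Std_perm[OF \<sigma>] by (auto simp: perms_def)
next
  case (insert a T)
  then obtain f where f: "packed f" "length f = n" "Std f = \<sigma>" "M f = M \<sigma> - T"
    by auto
  have a: "a \<in> M f" using insert f(4) by auto
  have "M (merge_letter f (at f a)) = M \<sigma> - insert a T"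
    using M_merge_letter[OF f(1) a] f(4) by auto
  moreover have "Std (merge_letter f (at f a)) = \<sigma>"
    using Std_merge_letter[OF f(1) a] f(3) by simp
  ultimately show ?case
    using packed_merge_letter[OF f(1) a] f(2) by (intro exI[of _ "merge_letter f (at f a)"]) simp
qed

lemma exists_packed_word:
  assumes \<sigma>: "\<sigma> \<in> perms n" and S: "S \<subseteq> M \<sigma>"
  shows "\<exists>f. packed f \<and> length f = n \<and> Std f = \<sigma> \<and> M f = S"
proof -
  have "M \<sigma> \<subseteq> {1..length \<sigma>}" by (auto dest: mem_MD(1))
  then have fin: "finite (M \<sigma> - S)" by (metis finite_Diff finite_atLeastAtMost finite_subset)
  have "M \<sigma> - (M \<sigma> - S) = S" using S by blast
  then show ?thesis using exists_packed_word_M_diff[OF \<sigma> fin Diff_subset] by simp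
qed

lemma M_subset_M_Std:
  assumes pf: "packed f"
  shows "M f \<subseteq> M (Std f)"
proof -
  have "Std f \<in> perms (length f)" by (rule Std_in_perms)
  then have ps: "packed (Std f)" and "Std (Std f) = Std f"
    using Std_perm by (auto simp: perms_def)
  then show ?thesis using pw_le_iff[OF pf ps] pw_le_Std by simp
qed

lemma inj_on_Phi: "inj_on Phi (packed_words n)"
proof (rule inj_onI)
  fix f g assume "f \<in> packed_words n" "g \<in> packed_words n" "Phi f = Phi g"
  then have fg: "packed f" "packed g" "length f = length g" and "Std f = Std g" "M f = M g"
    by (auto simp: packed_words_def Phi_def)
  then have "pw_le f g" "pw_le g f"
    using pw_le_iff[OF fg] pw_le_iff[OF fg(2,1) fg(3)[symmetric]] by simp_all
  then show "f = g" using pw_le_antisym fg by blast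
qed

lemma image_Phi: "Phi ` packed_words n = boolean_union n"
proof
  show "Phi ` packed_words n \<subseteq> boolean_union n"
  proof
    fix x assume "x \<in> Phi ` packed_words n"
    then obtain f where "packed f" "length f = n" "x = (Std f, M f)"
      by (auto simp: packed_words_def Phi_def)
    then show "x \<in> boolean_union n"
      using Std_in_perms[of f] M_subset_M_Std[of f] by (simp add: boolean_union_def)
  qed
  show "boolean_union n \<subseteq> Phi ` packed_words n"
  proof
    fix x assume "x \<in> boolean_union n"
    then obtain \<sigma> S where x: "x = (\<sigma>, S)" "\<sigma> \<in> perms n" "S \<subseteq> M \<sigma>"
      by (auto simp: boolean_union_def)
    then obtain f where "packed f" "length f = n" "Std f = \<sigma>" "M f = S"
      using exists_packed_word by blast
    then show "x \<in> Phi ` packed_words n"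
      using x by (auto simp: packed_words_def Phi_def intro!: image_eqI[of _ _ f])
  qed
qed

theorem theorem23:
  shows "(\<forall>f g. packed f \<and> packed g \<and> length f = length g \<longrightarrow>
            (pw_le f g \<longleftrightarrow> Std f = Std g \<and> M f \<subseteq> M g))
       \<and> (\<forall>n\<ge>1. bij_betw Phi (packed_words n) (boolean_union n) \<and>
            (\<forall>f\<in>packed_words n. \<forall>g\<in>packed_words n.
               pw_le f g \<longleftrightarrow> bu_le (Phi f) (Phi g)))"
proof (intro conjI allI impI ballI)
  fix f g assume "packed f \<and> packed g \<and> length f = length g"
  then show "pw_le f g \<longleftrightarrow> Std f = Std g \<and> M f \<subseteq> M g"
    using pw_le_iff by blast
next
  fix n :: nat
  show "bij_betw Phi (packed_words n) (boolean_union n)"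
    using inj_on_Phi image_Phi by (rule bij_betw_imageI)
  fix f g assume "f \<in> packed_words n" "g \<in> packed_words n"
  then have "packed f" "packed g" "length f = length g" by (auto simp: packed_words_def)
  then show "pw_le f g \<longleftrightarrow> bu_le (Phi f) (Phi g)"
    using pw_le_iff by (simp add: bu_le_def Phi_def)
qed

end
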